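(* Fix $x_{\rm A}>0$. For $0<x_{\rm B}<x_{\rm A}$ let $T_D^R(v_{\rm A};x_{\rm B})$ be the direct rectilinear elapsed-time function. Then $$\frac{\partial^2T_D^R}{\partial v_{\rm A}^2}(0;x_{\rm B})\longrightarrow+\infty\qquad\text{as }x_{\rm B}\to x_{\rm A}^-.$$
   Context: Kepler problem on a line normalized as $\ddot x=-1/x^2$ ($x>0$). For $v_{\rm A}<\sqrt{2/x_{\rm A}}$, $T_D^R(v_{\rm A};x_{\rm B})$ is the first time after $t_{\rm A}$ (minus $t_{\rm A}$) at which the solution with $x(t_{\rm A})=x_{\rm A}$, $\dot x(t_{\rm A})=v_{\rm A}$ reaches $x_{\rm B}$ (without collision with $0$; after culmination if $v_{\rm A}\ge0$). It is a smooth function of $v_{\rm A}$. *)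

theory Defs
  imports "HOL-Analysis.Analysis"
begin

text \<open>Solution of the normalized rectilinear Kepler equation x'' = -1/x^2 on [0,t]
  (time measured from t_A), staying in x > 0 (no collision), with
  x(0) = xA and x'(0) = vA.\<close>
definition kepler_sol :: "real \<Rightarrow> real \<Rightarrow> real \<Rightarrow> (real \<Rightarrow> real) \<Rightarrow> (real \<Rightarrow> real) \<Rightarrow> bool" where
  "kepler_sol xA vA t x x' \<longleftrightarrow>
     x 0 = xA \<and> x' 0 = vA \<and>
     (\<forall>s\<in>{0..t}. x s > 0 \<and>
        (x has_real_derivative x' s) (at s within {0..t}) \<and>
        (x' has_real_derivative (- 1 / (x s)^2)) (at s within {0..t}))"

definition TDR :: "real \<Rightarrow> real \<Rightarrow> real \<Rightarrow> real" where
  "TDR xA xB vA = (THE t. t > 0 \<and> (\<exists>x x'. kepler_sol xA vA t x x' \<and> x t = xB \<and>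
                       (\<forall>s\<in>{0<..<t}. x s \<noteq> xB)))"

end

theory Submission
  imports Defs
begin

text \<open>Energy conservation puts the motion on the curve \<open>x = 2a/(1 + a v\<^sup>2)\<close>, where
  \<open>a = xA/(2 - xA vA\<^sup>2)\<close> is the semi-major axis, and \<open>v' = -1/x\<^sup>2\<close> makes the elapsed time
  an explicit decreasing function of the velocity. This splits \<open>T_D^R(vA) = F(a(vA)) + G(vA)\<close>,
  where \<open>F(a)\<close> is the time at which velocity \<open>-\<surd>(2a/xB - 1)/\<surd>a\<close> (arrival at \<open>xB\<close>) is reached
  and \<open>G\<close> does not depend on \<open>xB\<close>. As \<open>a'(0) = 0\<close> and \<open>a''(0) = xA\<^sup>2/2\<close>, the second derivative
  at \<open>0\<close> is \<open>G''(0) + xA\<^sup>2/2 \<cdot> F'(xA/2)\<close>, and \<open>F'(a)\<close> contains the term \<open>2\<surd>a/\<surd>(2a/xB - 1)\<close>,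
  which blows up as \<open>xB \<rightarrow> 2a = xA\<close>.\<close>

lemma one_plus_mult_square_pos: "0 \<le> a \<Longrightarrow> 0 < 1 + a * (p::real)^2"
  by (simp add: add_pos_nonneg)

text \<open>On the energy level \<open>v\<^sup>2/2 - 1/x = -1/(2a)\<close> the position is \<open>kepler_radius a v\<close>,
  and \<open>v' = -1/x\<^sup>2\<close> gives \<open>dt/dv = -x\<^sup>2\<close>, which integrates to \<open>kepler_time a v\<close>.\<close>

definition kepler_radius :: "real \<Rightarrow> real \<Rightarrow> real" where
  "kepler_radius a p = 2 * a / (1 + a * p^2)"

definition kepler_time :: "real \<Rightarrow> real \<Rightarrow> real" where
  "kepler_time a p = - 2 * a * sqrt a * (arctan (sqrt a * p) + sqrt a * p / (1 + a * p^2))"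

definition kepler_velocity :: "real \<Rightarrow> real \<Rightarrow> real" where
  "kepler_velocity a = inv (kepler_time a)"

lemma kepler_radius_pos: "0 < a \<Longrightarrow> 0 < kepler_radius a p"
  unfolding kepler_radius_def by (simp add: one_plus_mult_square_pos)

lemma kepler_radius_less_iff:
  "0 < a \<Longrightarrow> kepler_radius a p < kepler_radius a q \<longleftrightarrow> q^2 < p^2"
  using one_plus_mult_square_pos[of a p] one_plus_mult_square_pos[of a q]
  by (auto simp: kepler_radius_def field_simps)

lemma kepler_radius_eq_iff:
  "0 < a \<Longrightarrow> kepler_radius a p = kepler_radius a q \<longleftrightarrow> p^2 = q^2"
  using one_plus_mult_square_pos[of a p] one_plus_mult_square_pos[of a q]
  by (auto simp: kepler_radius_def field_simps)

lemma kepler_radius_energy: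
  "0 < a \<Longrightarrow> p^2 / 2 - 1 / kepler_radius a p = - 1 / (2 * a)"
  unfolding kepler_radius_def by (simp add: field_simps)

lemma DERIV_kepler_radius:
  assumes "0 < a"
  shows "(kepler_radius a has_real_derivative - p * (kepler_radius a p)^2) (at p)"
  unfolding kepler_radius_def [abs_def] using one_plus_mult_square_pos[of a p] assms
  by (auto intro!: derivative_eq_intros simp: field_simps power2_eq_square)

lemma DERIV_kepler_time:
  assumes "0 < a"
  shows "(kepler_time a has_real_derivative (- ((kepler_radius a p)^2))) (at p)"
proof -
  obtain s where a: "a = s^2" and "0 < s"
    using assms by (metis real_sqrt_gt_0_iff real_sqrt_pow2 less_imp_le)
  then have q: "1 + s^2 * p^2 \<noteq> 0" "\<bar>s\<bar> = s"
    using one_plus_mult_square_pos[of "s^2" p] by auto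
  show ?thesis
    unfolding kepler_time_def [abs_def] kepler_radius_def a
    apply (rule derivative_eq_intros refl | simp add: q)+
    using q by (simp add: divide_simps) (simp add: algebra_simps power2_eq_square power4_eq_xxxx)
qed

lemma kepler_time_strict_antimono:
  assumes "0 < a" "p < q"
  shows "kepler_time a q < kepler_time a p"
proof (rule DERIV_neg_imp_decreasing[OF assms(2)])
  fix x
  have "- ((kepler_radius a x)^2) < 0" using kepler_radius_pos[OF assms(1), of x] by simp
  then show "\<exists>y. (kepler_time a has_real_derivative y) (at x) \<and> y < 0"
    using DERIV_kepler_time[OF assms(1), of x] by blast
qed

lemma kepler_time_less_iff: "0 < a \<Longrightarrow> kepler_time a q < kepler_time a p \<longleftrightarrow> p < q"
  using kepler_time_strict_antimono[of a p q] kepler_time_strict_antimono[of a q p]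
  by (cases p q rule: linorder_cases) auto

lemma kepler_time_eq_iff: "0 < a \<Longrightarrow> kepler_time a q = kepler_time a p \<longleftrightarrow> p = q"
  using kepler_time_strict_antimono[of a p q] kepler_time_strict_antimono[of a q p]
  by (cases p q rule: linorder_cases) auto

lemma isCont_kepler_time: "0 < a \<Longrightarrow> isCont (kepler_time a) p"
  using DERIV_kepler_time DERIV_isCont by blast

lemma kepler_velocity_time: "0 < a \<Longrightarrow> kepler_velocity a (kepler_time a p) = p"
  unfolding kepler_velocity_def by (rule inv_f_f) (auto simp: inj_def kepler_time_eq_iff)

lemma kepler_time_velocity:
  assumes "0 < a" "p \<le> q" "kepler_time a q \<le> t" "t \<le> kepler_time a p"
  shows "kepler_time a (kepler_velocity a t) = t"
proof -
  obtain z where "kepler_time a z = t"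
    using IVT2[of "kepler_time a" q t p] assms isCont_kepler_time[OF assms(1)] by auto
  then show ?thesis using kepler_velocity_time[OF assms(1)] by auto
qed

lemma DERIV_kepler_velocity:
  assumes "0 < a"
  shows "(kepler_velocity a has_real_derivative - 1 / (kepler_radius a p)^2) (at (kepler_time a p))"
proof -
  have "(kepler_velocity a has_real_derivative inverse (- ((kepler_radius a p)^2)))
          (at (kepler_time a p))"
  proof (rule DERIV_inverse_function)
    show "(kepler_time a has_real_derivative (- ((kepler_radius a p)^2)))
            (at (kepler_velocity a (kepler_time a p)))"
      using DERIV_kepler_time[OF assms] by (simp add: kepler_velocity_time[OF assms])
    show "- ((kepler_radius a p)^2) \<noteq> 0"
      using kepler_radius_pos[OF assms, of p] by simp
    show "kepler_time a (p + 1) < kepler_time a p" "kepler_time a p < kepler_time a (p - 1)"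
      using kepler_time_strict_antimono[OF assms] by auto
    show "kepler_time a (kepler_velocity a t) = t"
      if "kepler_time a (p + 1) < t" "t < kepler_time a (p - 1)" for t
      using kepler_time_velocity[OF assms, of "p - 1" "p + 1" t] that by auto
    show "isCont (kepler_velocity a) (kepler_time a p)"
      by (rule isCont_inverse_function[of 1])
        (auto simp: kepler_velocity_time[OF assms] isCont_kepler_time[OF assms])
  qed
  then show ?thesis by (simp add: inverse_eq_divide)
qed

lemma DERIV_kepler_radius_along:
  assumes "0 < a" and "(P has_real_derivative - 1 / (kepler_radius a (P s))^2) (at s within S)"
  shows "((\<lambda>s. kepler_radius a (P s)) has_real_derivative P s) (at s within S)"
  using DERIV_chain'[OF assms(2) DERIV_kepler_radius[OF assms(1)]]
    kepler_radius_pos[OF assms(1), of "P s"]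
  by simp

lemma kepler_sol_energy:
  assumes sol: "kepler_sol xA v t Y Y'" and s: "s \<in> {0..t}"
  shows "(Y' s)^2 / 2 - 1 / Y s = v^2 / 2 - 1 / xA"
proof -
  have Yp: "\<And>s. s \<in> {0..t} \<Longrightarrow> 0 < Y s"
    and dY: "\<And>s. s \<in> {0..t} \<Longrightarrow> (Y has_real_derivative Y' s) (at s within {0..t})"
    and dY': "\<And>s. s \<in> {0..t} \<Longrightarrow> (Y' has_real_derivative - 1 / (Y s)^2) (at s within {0..t})"
    using sol unfolding kepler_sol_def by auto
  have "\<exists>c. \<forall>s\<in>{0..t}. (Y' s)^2 / 2 - 1 / Y s = c"
  proof (rule has_field_derivative_zero_constant)
    fix s assume s: "s \<in> {0..t}"
    show "((\<lambda>s. (Y' s)^2 / 2 - 1 / Y s) has_real_derivative 0) (at s within {0..t})"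
      using dY[OF s] dY'[OF s] Yp[OF s]
      by (auto intro!: derivative_eq_intros simp: power2_eq_square field_simps)
  qed simp
  then show ?thesis using s sol unfolding kepler_sol_def by force
qed

lemma kepler_sol_on_orbit:
  assumes a: "0 < a" and sol: "kepler_sol (kepler_radius a v) v t Y Y'" and s: "s \<in> {0..t}"
  shows "Y s = kepler_radius a (Y' s)" and "kepler_time a (Y' s) = kepler_time a v + s"
proof -
  have radius: "Y s = kepler_radius a (Y' s)" if s: "s \<in> {0..t}" for s
  proof -
    have "1 / Y s = 1 / kepler_radius a (Y' s)"
      using kepler_sol_energy[OF sol s] kepler_radius_energy[OF a, of v]
        kepler_radius_energy[OF a, of "Y' s"] by linarith
    then show ?thesis by simp
  qed
  then show "Y s = kepler_radius a (Y' s)" using s .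
  have "\<exists>c. \<forall>s\<in>{0..t}. kepler_time a (Y' s) - s = c"
  proof (rule has_field_derivative_zero_constant)
    fix s assume s: "s \<in> {0..t}"
    have "(Y' has_real_derivative - 1 / (Y s)^2) (at s within {0..t})"
      using sol s unfolding kepler_sol_def by blast
    from DERIV_diff[OF DERIV_chain'[OF this DERIV_kepler_time[OF a]] DERIV_ident]
    show "((\<lambda>s. kepler_time a (Y' s) - s) has_real_derivative 0) (at s within {0..t})"
      using kepler_radius_pos[OF a, of "Y' s"] by (simp add: radius[OF s])
  qed simp
  then obtain c where "\<And>s. s \<in> {0..t} \<Longrightarrow> kepler_time a (Y' s) - s = c" by blast
  from this[OF s] this[of 0] show "kepler_time a (Y' s) = kepler_time a v + s"
    using s sol unfolding kepler_sol_def by simp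
qed

lemma kepler_sol_exists:
  assumes a: "0 < a" and "p \<le> v"
  obtains Y Y' where "kepler_sol (kepler_radius a v) v (kepler_time a p - kepler_time a v) Y Y'"
proof
  define t where "t = kepler_time a p - kepler_time a v"
  define Y' where "Y' s = kepler_velocity a (kepler_time a v + s)" for s
  define Y where "Y s = kepler_radius a (Y' s)" for s
  have dY': "(Y' has_real_derivative - 1 / (Y s)^2) (at s)" if s: "s \<in> {0..t}" for s
  proof -
    have "kepler_time a (Y' s) = kepler_time a v + s"
      using kepler_time_velocity[OF a \<open>p \<le> v\<close>] s unfolding Y'_def t_def by auto
    then have "(kepler_velocity a has_real_derivative - 1 / (Y s)^2) (at (kepler_time a v + s))"
      using DERIV_kepler_velocity[OF a, of "Y' s"] unfolding Y_def by simp
    from DERIV_chain'[OF DERIV_add[OF DERIV_const DERIV_ident] this]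
    show ?thesis unfolding Y'_def[abs_def] by simp
  qed
  show "kepler_sol (kepler_radius a v) v t Y Y'"
    unfolding kepler_sol_def
  proof (intro conjI ballI)
    show "Y' 0 = v" unfolding Y'_def using kepler_velocity_time[OF a] by simp
    then show "Y 0 = kepler_radius a v" unfolding Y_def by simp
    fix s assume s: "s \<in> {0..t}"
    show "0 < Y s" unfolding Y_def using kepler_radius_pos[OF a] .
    show "(Y' has_real_derivative - 1 / (Y s)^2) (at s within {0..t})"
      using dY'[OF s] by (rule has_field_derivative_at_within)
    then show "(Y has_real_derivative Y' s) (at s within {0..t})"
      unfolding Y_def[abs_def] by (rule DERIV_kepler_radius_along[OF a])
  qed
qed

definition semi_major_axis :: "real \<Rightarrow> real \<Rightarrow> real" where
  "semi_major_axis xA v = xA / (2 - xA * v^2)"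

definition semi_major_axis_deriv :: "real \<Rightarrow> real \<Rightarrow> real" where
  "semi_major_axis_deriv xA v = 2 * xA^2 * v / (2 - xA * v^2)^2"

definition arrival_param :: "real \<Rightarrow> real \<Rightarrow> real" where
  "arrival_param xB a = sqrt (2 * a / xB - 1)"

lemma semi_major_axis_pos: "0 < xA \<Longrightarrow> xA * v^2 < 2 \<Longrightarrow> 0 < semi_major_axis xA v"
  unfolding semi_major_axis_def by simp

lemma semi_major_axis_ge: "0 < xA \<Longrightarrow> xA * v^2 < 2 \<Longrightarrow> xA \<le> 2 * semi_major_axis xA v"
  unfolding semi_major_axis_def by (simp add: field_simps)

lemma kepler_radius_semi_major_axis:
  "0 < xA \<Longrightarrow> xA * v^2 < 2 \<Longrightarrow> kepler_radius (semi_major_axis xA v) v = xA"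
  unfolding kepler_radius_def semi_major_axis_def by (simp add: field_simps)

lemma kepler_radius_arrival_param:
  assumes "0 < a" "0 < xB" "xB \<le> 2 * a"
  shows "kepler_radius a (arrival_param xB a / sqrt a) = xB"
proof -
  have "a * (arrival_param xB a / sqrt a)^2 = 2 * a / xB - 1"
    using assms unfolding arrival_param_def by (simp add: power_divide)
  then show ?thesis using assms unfolding kepler_radius_def by simp
qed

lemma kepler_radius_reached_iff:
  assumes a: "0 < a" and "\<bar>v\<bar> < w" "0 < s" and time: "kepler_time a p = kepler_time a v + s"
  shows "kepler_radius a p = kepler_radius a w \<longleftrightarrow> s = kepler_time a (- w) - kepler_time a v"
proof -
  have "p < v" using \<open>0 < s\<close> time kepler_time_less_iff[OF a, of v p] by simp
  then have "kepler_radius a p = kepler_radius a w \<longleftrightarrow> p = - w"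
    using \<open>\<bar>v\<bar> < w\<close> by (auto simp: kepler_radius_eq_iff[OF a] power2_eq_iff)
  also have "\<dots> \<longleftrightarrow> kepler_time a p = kepler_time a (- w)"
    using kepler_time_eq_iff[OF a] by metis
  finally show ?thesis using time by linarith
qed

lemma TDR_eq_kepler_time:
  assumes xA: "0 < xA" and xB: "0 < xB" "xB < xA" and v: "xA * v^2 < 2"
  defines "a \<equiv> semi_major_axis xA v"
  shows "TDR xA xB v = kepler_time a (- (arrival_param xB a / sqrt a)) - kepler_time a v"
proof -
  define w where "w = arrival_param xB a / sqrt a"
  define t where "t = kepler_time a (- w) - kepler_time a v"
  have a: "0 < a" unfolding a_def using xA v by (rule semi_major_axis_pos)
  have radius_v: "kepler_radius a v = xA"
    unfolding a_def using xA v by (rule kepler_radius_semi_major_axis)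
  have xB_le: "xB \<le> 2 * a" using xB(2) semi_major_axis_ge[OF xA v] unfolding a_def by simp
  have radius_w: "kepler_radius a w = xB"
    unfolding w_def using a xB(1) xB_le by (rule kepler_radius_arrival_param)
  have "v^2 < w^2"
    using xB(2) kepler_radius_less_iff[OF a, of w v] radius_v radius_w by simp
  moreover have "0 \<le> w" unfolding w_def arrival_param_def using a xB(1) xB_le by simp
  ultimately have vw: "\<bar>v\<bar> < w" using power2_less_imp_less[of "\<bar>v\<bar>" w] by simp
  then have t: "0 < t" unfolding t_def using kepler_time_strict_antimono[OF a, of "- w" v] by simp
  have reached_iff: "Y s = xB \<longleftrightarrow> s = t"
    if sol: "kepler_sol xA v T Y Y'" and s: "s \<in> {0<..T}" for T Y Y' s
  proof -
    have sol': "kepler_sol (kepler_radius a v) v T Y Y'" using sol radius_v by simp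
    from s have "s \<in> {0..T}" by simp
    from kepler_sol_on_orbit[OF a sol' this] kepler_radius_reached_iff[OF a vw, of s "Y' s"] s
    show ?thesis unfolding radius_w t_def by simp
  qed
  show ?thesis unfolding TDR_def w_def[symmetric] t_def[symmetric]
  proof (rule the_equality)
    have "- w \<le> v" using vw by simp
    then obtain Y Y' where "kepler_sol (kepler_radius a v) v t Y Y'"
      using kepler_sol_exists[OF a] unfolding t_def by blast
    then have sol: "kepler_sol xA v t Y Y'" unfolding radius_v .
    show "0 < t \<and> (\<exists>Y Y'. kepler_sol xA v t Y Y' \<and> Y t = xB \<and> (\<forall>s\<in>{0<..<t}. Y s \<noteq> xB))"
    proof (intro conjI exI ballI)
      show "Y t = xB" using reached_iff[OF sol] t by simp
      show "Y s \<noteq> xB" if "s \<in> {0<..<t}" for s using reached_iff[OF sol] that by simp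
    qed (use t sol in auto)
  next
    fix t' assume "0 < t' \<and> (\<exists>Y Y'. kepler_sol xA v t' Y Y' \<and> Y t' = xB \<and> (\<forall>s\<in>{0<..<t'}. Y s \<noteq> xB))"
    then show "t' = t" using reached_iff by auto
  qed
qed

definition departure_time :: "real \<Rightarrow> real \<Rightarrow> real" where
  "departure_time xA v = - kepler_time (semi_major_axis xA v) v"

lemma semi_major_axis_0: "semi_major_axis xA 0 = xA / 2"
  unfolding semi_major_axis_def by simp

lemma semi_major_axis_deriv_0: "semi_major_axis_deriv xA 0 = 0"
  unfolding semi_major_axis_deriv_def by simp

lemma DERIV_semi_major_axis:
  "xA * v^2 \<noteq> 2 \<Longrightarrow> (semi_major_axis xA has_real_derivative semi_major_axis_deriv xA v) (at v)"
  unfolding semi_major_axis_def [abs_def] semi_major_axis_deriv_def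
  by (auto intro!: derivative_eq_intros simp: divide_simps) (simp add: algebra_simps power2_eq_square)

lemma DERIV_semi_major_axis_deriv_0:
  "(semi_major_axis_deriv xA has_real_derivative xA^2 / 2) (at 0)"
  unfolding semi_major_axis_deriv_def [abs_def] by (auto intro!: derivative_eq_intros)

lemma departure_time_twice_differentiable:
  assumes xA: "0 < xA"
  obtains G1 G2 where "\<And>v. xA * v^2 < 2 \<Longrightarrow> (departure_time xA has_real_derivative G1 v) (at v)"
    and "(G1 has_real_derivative G2) (at 0)"
proof -
  have "\<exists>G1 G2. (\<forall>v. xA * v^2 < 2 \<longrightarrow> (departure_time xA has_real_derivative G1 v) (at v)) \<and>
      (G1 has_real_derivative G2) (at 0)"
    unfolding departure_time_def [abs_def] kepler_time_def
    by (intro exI conjI allI impI, frule semi_major_axis_pos[OF xA])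
      (rule DERIV_chain2[OF DERIV_real_sqrt] DERIV_semi_major_axis DERIV_semi_major_axis_deriv_0
          derivative_intros
        | simp add: one_plus_mult_square_pos[THEN dual_order.strict_implies_not_eq]
            semi_major_axis_0 xA xA[THEN less_imp_neq, symmetric])+
  then show ?thesis using that by blast
qed

definition arrival_time :: "real \<Rightarrow> real \<Rightarrow> real" where
  "arrival_time xB a =
     2 * a * sqrt a * arctan (arrival_param xB a) + xB * sqrt a * arrival_param xB a"

definition arrival_time_deriv :: "real \<Rightarrow> real \<Rightarrow> real" where
  "arrival_time_deriv xB a = 3 * sqrt a * arctan (arrival_param xB a)
     + 2 * sqrt a / arrival_param xB a + xB * arrival_param xB a / (2 * sqrt a)"

lemma kepler_time_arrival_param:
  assumes a: "0 < a" and xB: "0 < xB" "xB \<le> 2 * a"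
  shows "kepler_time a (- (arrival_param xB a / sqrt a)) = arrival_time xB a"
proof -
  define r where "r = arrival_param xB a"
  have "a * (- (r / sqrt a))^2 = r^2" "sqrt a * (- (r / sqrt a)) = - r"
    using a by (simp_all add: power_divide)
  moreover have "1 + r^2 = 2 * a / xB" unfolding r_def arrival_param_def using xB by simp
  ultimately show ?thesis
    unfolding kepler_time_def arrival_time_def r_def[symmetric]
    using a xB by (simp add: arctan_minus) (simp add: field_simps)
qed

lemma DERIV_arrival_param:
  assumes "0 < xB" "xB < 2 * a"
  shows "(arrival_param xB has_real_derivative 1 / (xB * arrival_param xB a)) (at a)"
  unfolding arrival_param_def [abs_def] using assms
  by (auto intro!: derivative_eq_intros DERIV_chain2[OF DERIV_real_sqrt] simp: field_simps)

lemma DERIV_arrival_time: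
  assumes xB: "0 < xB" "xB < 2 * a"
  shows "(arrival_time xB has_real_derivative arrival_time_deriv xB a) (at a)"
proof -
  have a: "0 < a" using xB by simp
  define r where "r = arrival_param xB a"
  have r: "0 < r" "r^2 = 2 * a / xB - 1"
    unfolding r_def arrival_param_def using xB by (simp_all add: field_simps)
  have sqrt_a: "sqrt a * (sqrt a * x) = a * x" for x using a by (simp add: mult.assoc[symmetric])
  show ?thesis
    unfolding arrival_time_def [abs_def]
    apply (rule DERIV_arrival_param[OF xB] DERIV_real_sqrt[OF a] derivative_eq_intros refl)+
    unfolding arrival_time_deriv_def r_def[symmetric]
    using xB r by (simp add: field_simps) (simp add: sqrt_a power2_eq_square)
qed

lemma arrival_time_deriv_differentiable:
  assumes xB: "0 < xB" "xB < 2 * a"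
  shows "arrival_time_deriv xB differentiable (at a)"
proof -
  have "0 < a" "0 < arrival_param xB a"
    using xB unfolding arrival_param_def by (simp_all add: field_simps)
  then show ?thesis
    unfolding real_differentiable_def arrival_time_deriv_def [abs_def]
    by (intro exI)
      (rule DERIV_arrival_param[OF xB] DERIV_real_sqrt derivative_intros | simp)+
qed

lemma arrival_time_deriv_tendsto_at_top:
  assumes a: "0 < a"
  shows "filterlim (\<lambda>xB. arrival_time_deriv xB a) at_top (at_left (2 * a))"
proof (rule filterlim_at_top_mono)
  have near: "\<forall>\<^sub>F xB in at_left (2 * a). xB \<in> {0<..<2 * a}"
    using a by (intro eventually_at_left_real) simp
  have "((\<lambda>xB. arrival_param xB a) \<longlongrightarrow> arrival_param (2 * a) a) (at_left (2 * a))"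
    unfolding arrival_param_def using a by (intro tendsto_intros) auto
  then have "((\<lambda>xB. arrival_param xB a) \<longlongrightarrow> 0) (at_left (2 * a))"
    using a by (simp add: arrival_param_def)
  moreover have "\<forall>\<^sub>F xB in at_left (2 * a). 0 < arrival_param xB a"
    using near by eventually_elim (simp add: arrival_param_def field_simps)
  ultimately have "filterlim (\<lambda>xB. arrival_param xB a) (at_right 0) (at_left (2 * a))"
    by (rule tendsto_imp_filterlim_at_right)
  then have "filterlim (\<lambda>xB. inverse (arrival_param xB a)) at_top (at_left (2 * a))"
    by (rule filterlim_compose[OF filterlim_inverse_at_top_right])
  then show "filterlim (\<lambda>xB. 2 * sqrt a * inverse (arrival_param xB a)) at_top (at_left (2 * a))"
    using a by (intro filterlim_tendsto_pos_mult_at_top[OF tendsto_const]) simp_all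
  show "\<forall>\<^sub>F xB in at_left (2 * a). 2 * sqrt a * inverse (arrival_param xB a) \<le> arrival_time_deriv xB a"
    using near
  proof eventually_elim
    case (elim xB)
    then have r: "0 < arrival_param xB a" unfolding arrival_param_def by (simp add: field_simps)
    have "0 \<le> 3 * sqrt a * arctan (arrival_param xB a)"
      using r a by (simp add: zero_le_mult_iff)
    moreover have "0 \<le> xB * arrival_param xB a / (2 * sqrt a)"
      using r a elim by simp
    moreover have "2 * sqrt a * inverse (arrival_param xB a) = 2 * sqrt a / arrival_param xB a"
      by (simp add: divide_inverse)
    ultimately show ?case unfolding arrival_time_deriv_def by linarith
  qed
qed

lemma deriv_deriv_eqI:
  fixes f :: "real \<Rightarrow> real"
  assumes "open S" "x \<in> S"
    and "\<And>y. y \<in> S \<Longrightarrow> (f has_real_derivative f' y) (at y)"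
    and "(f' has_real_derivative f'') (at x)"
  shows "deriv (deriv f) x = f''"
proof -
  have "(deriv f has_real_derivative f'') (at x)"
    using assms(4) assms(1,2)
    by (rule has_field_derivative_transform_within_open) (use assms(3) DERIV_imp_deriv in metis)
  then show ?thesis by (rule DERIV_imp_deriv)
qed

lemma TDR_eq_arrival_departure:
  assumes "0 < xA" "0 < xB" "xB < xA" "xA * v^2 < 2"
  shows "TDR xA xB v = arrival_time xB (semi_major_axis xA v) + departure_time xA v"
  using assms semi_major_axis_pos[of xA v] semi_major_axis_ge[of xA v]
  by (simp add: TDR_eq_kepler_time kepler_time_arrival_param departure_time_def)

lemma DERIV_TDR:
  assumes xA: "0 < xA" and xB: "0 < xB" "xB < xA" and v: "xA * v^2 < 2"
    and G: "(departure_time xA has_real_derivative G) (at v)"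
  shows "((\<lambda>vA. TDR xA xB vA) has_real_derivative
           arrival_time_deriv xB (semi_major_axis xA v) * semi_major_axis_deriv xA v + G) (at v)"
proof -
  define S where "S = {v. xA * v^2 < (2::real)}"
  have S: "open S" "v \<in> S" unfolding S_def using v by (intro open_Collect_less continuous_intros, simp_all)
  have "xB < 2 * semi_major_axis xA v" using xB semi_major_axis_ge[OF xA v] by simp
  then have "((\<lambda>v. arrival_time xB (semi_major_axis xA v)) has_real_derivative
      arrival_time_deriv xB (semi_major_axis xA v) * semi_major_axis_deriv xA v) (at v)"
    using v xB(1) by (intro DERIV_chain2[OF DERIV_arrival_time] DERIV_semi_major_axis) simp_all
  from DERIV_add[OF this G] S show ?thesis
  proof (rule has_field_derivative_transform_within_open)
    show "arrival_time xB (semi_major_axis xA u) + departure_time xA u = TDR xA xB u"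
      if "u \<in> S" for u
      using that xA xB TDR_eq_arrival_departure unfolding S_def by simp
  qed
qed

lemma deriv_deriv_TDR:
  assumes xA: "0 < xA" and xB: "0 < xB" "xB < xA"
  shows "deriv (deriv (\<lambda>vA. TDR xA xB vA)) 0 =
    deriv (deriv (departure_time xA)) 0 + xA^2 / 2 * arrival_time_deriv xB (xA / 2)"
proof -
  define S where "S = {v. xA * v^2 < (2::real)}"
  have S: "open S" "0 \<in> S" unfolding S_def by (intro open_Collect_less continuous_intros) simp_all
  obtain G1 G2 where G1: "\<And>v. xA * v^2 < 2 \<Longrightarrow> (departure_time xA has_real_derivative G1 v) (at v)"
    and G2: "(G1 has_real_derivative G2) (at 0)"
    using departure_time_twice_differentiable[OF xA] by metis
  have "xB < 2 * semi_major_axis xA 0" using xB by (simp add: semi_major_axis_0)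
  then obtain D where "(arrival_time_deriv xB has_real_derivative D) (at (semi_major_axis xA 0))"
    using xB(1) arrival_time_deriv_differentiable real_differentiable_def by blast
  then have "((\<lambda>v. arrival_time_deriv xB (semi_major_axis xA v)) has_real_derivative D * 0) (at 0)"
    using DERIV_semi_major_axis[of xA 0] by (intro DERIV_chain2) (simp_all add: semi_major_axis_deriv_0)
  from DERIV_add[OF DERIV_mult[OF this DERIV_semi_major_axis_deriv_0] G2]
  have second: "((\<lambda>v. arrival_time_deriv xB (semi_major_axis xA v) * semi_major_axis_deriv xA v + G1 v)
      has_real_derivative G2 + xA^2 / 2 * arrival_time_deriv xB (xA / 2)) (at 0)"
    by (simp add: semi_major_axis_0 semi_major_axis_deriv_0 add.commute)
  have "deriv (deriv (\<lambda>vA. TDR xA xB vA)) 0 = G2 + xA^2 / 2 * arrival_time_deriv xB (xA / 2)"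
    by (rule deriv_deriv_eqI[OF S _ second]) (use DERIV_TDR[OF xA xB] G1 in \<open>simp add: S_def\<close>)
  moreover have "deriv (deriv (departure_time xA)) 0 = G2"
    using S G1 G2 unfolding S_def by (rule deriv_deriv_eqI) simp
  ultimately show ?thesis by simp
qed

theorem mainTheorem12:
  fixes xA :: real
  assumes "xA > 0"
  shows "filterlim (\<lambda>xB. deriv (deriv (\<lambda>vA. TDR xA xB vA)) 0) at_top (at_left xA)"
proof -
  have "filterlim (\<lambda>xB. arrival_time_deriv xB (xA / 2)) at_top (at_left xA)"
    using arrival_time_deriv_tendsto_at_top[of "xA / 2"] assms by simp
  then have lim: "filterlim (\<lambda>xB. deriv (deriv (departure_time xA)) 0
      + xA^2 / 2 * arrival_time_deriv xB (xA / 2)) at_top (at_left xA)"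
    using assms by (intro filterlim_tendsto_add_at_top[OF tendsto_const]
        filterlim_tendsto_pos_mult_at_top[OF tendsto_const]) simp_all
  have eq: "\<forall>\<^sub>F xB in at_left xA. deriv (deriv (\<lambda>vA. TDR xA xB vA)) 0 =
      deriv (deriv (departure_time xA)) 0 + xA^2 / 2 * arrival_time_deriv xB (xA / 2)"
    using eventually_at_left_real[OF assms] by eventually_elim (use assms deriv_deriv_TDR in auto)
  show ?thesis by (subst filterlim_cong[OF refl refl eq]) (rule lim)
qed
end
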